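(* For every prime power $k$, the graph $G_k$ has girth at least $6$.
   Context: A Latin square of order $k$ is a partition $L = L(1) \cup \dots \cup L(k)$ of $A = [k]\times[k]$ such that each row $A[i,\cdot] = \{(i,j) : j \in [k]\}$ and each column $\{(j,i): j\in[k]\}$ meets each part $L(n)$ in exactly one position. Two Latin squares $L_1, L_2$ of order $k$ are orthogonal if $|L_1(n_1)\cap L_2(n_2)| = 1$ for all $n_1, n_2 \in [k]$. For a prime power $k$, fix $k-1$ mutually orthogonal Latin squares $L_1,\dots,L_{k-1}$ of order $k$. Let $R = \{A[i,\cdot] : i \in [k]\}$ (the rows) and $\mathcal{L} = \{L_s(n) : s \in [k-1], n \in [k]\}$. The graph $G_k$ has vertex set $A \cup R \cup \mathcal{L}$ (disjoint union, $2k^2$ vertices) and an edge between $p \in A$ and $S \in R \cup \mathcal{L}$ whenever $p \in S$; no other edges. The girth is the length of a shortest cycle. *)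

theory Defs
  imports "HOL-Number_Theory.Prime_Powers"
begin

type_synonym pos = "nat \<times> nat"

definition grid :: "nat \<Rightarrow> pos set" where
  "grid k = {1..k} \<times> {1..k}"

definition row :: "nat \<Rightarrow> nat \<Rightarrow> pos set" where
  "row k i = {(i, j) | j. j \<in> {1..k}}"

definition col :: "nat \<Rightarrow> nat \<Rightarrow> pos set" where
  "col k i = {(j, i) | j. j \<in> {1..k}}"

definition latin_square :: "nat \<Rightarrow> (nat \<Rightarrow> pos set) \<Rightarrow> bool" where
  "latin_square k L \<longleftrightarrow>
     (\<Union>n\<in>{1..k}. L n) = grid k \<and>
     (\<forall>n\<in>{1..k}. \<forall>m\<in>{1..k}. n \<noteq> m \<longrightarrow> L n \<inter> L m = {}) \<and>
     (\<forall>i\<in>{1..k}. \<forall>n\<in>{1..k}. card (row k i \<inter> L n) = 1 \<and> card (col k i \<inter> L n) = 1)"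

definition orthogonal :: "nat \<Rightarrow> (nat \<Rightarrow> pos set) \<Rightarrow> (nat \<Rightarrow> pos set) \<Rightarrow> bool" where
  "orthogonal k L1 L2 \<longleftrightarrow> (\<forall>n1\<in>{1..k}. \<forall>n2\<in>{1..k}. card (L1 n1 \<inter> L2 n2) = 1)"

definition MOLS :: "nat \<Rightarrow> (nat \<Rightarrow> nat \<Rightarrow> pos set) \<Rightarrow> bool" where
  "MOLS k Ls \<longleftrightarrow> (\<forall>s\<in>{1..k-1}. latin_square k (Ls s)) \<and>
     (\<forall>s\<in>{1..k-1}. \<forall>t\<in>{1..k-1}. s \<noteq> t \<longrightarrow> orthogonal k (Ls s) (Ls t))"

text \<open>Vertices: Inl p for points p of A, Inr S for blocks S in R \<union> \<L> (disjoint union).\<close>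
definition Gk_vertices :: "nat \<Rightarrow> (nat \<Rightarrow> nat \<Rightarrow> pos set) \<Rightarrow> (pos + pos set) set" where
  "Gk_vertices k Ls = Inl ` grid k \<union>
     Inr ` ({row k i | i. i \<in> {1..k}} \<union> {Ls s n | s n. s \<in> {1..k-1} \<and> n \<in> {1..k}})"

definition Gk_adj :: "nat \<Rightarrow> (nat \<Rightarrow> nat \<Rightarrow> pos set) \<Rightarrow> (pos + pos set) \<Rightarrow> (pos + pos set) \<Rightarrow> bool" where
  "Gk_adj k Ls u v \<longleftrightarrow> u \<in> Gk_vertices k Ls \<and> v \<in> Gk_vertices k Ls \<and>
     (\<exists>p S. ((u = Inl p \<and> v = Inr S) \<or> (u = Inr S \<and> v = Inl p)) \<and> p \<in> S)"

definition is_cycle :: "'v set \<Rightarrow> ('v \<Rightarrow> 'v \<Rightarrow> bool) \<Rightarrow> 'v list \<Rightarrow> bool" where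
  "is_cycle V E c \<longleftrightarrow> length c \<ge> 3 \<and> distinct c \<and> set c \<subseteq> V \<and>
     (\<forall>i<length c. E (c ! i) (c ! ((i + 1) mod length c)))"

text \<open>girth \<ge> g: every cycle has length \<ge> g (vacuous for acyclic graphs, girth = \<infinity>).\<close>
definition girth_ge :: "'v set \<Rightarrow> ('v \<Rightarrow> 'v \<Rightarrow> bool) \<Rightarrow> nat \<Rightarrow> bool" where
  "girth_ge V E g \<longleftrightarrow> (\<forall>c. is_cycle V E c \<longrightarrow> length c \<ge> g)"

end

theory Submission
  imports Defs
begin

text \<open>\<open>G\<^sub>k\<close> is bipartite, so it has no cycles of length 3 or 5. A 4-cycle would consist
  of two distinct points lying on two distinct blocks; but two distinct rows are disjoint, two
  distinct parts of one Latin square are disjoint, and a row and a part of a Latin square, or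
  parts of two orthogonal Latin squares, meet in exactly one position.\<close>

lemma is_cycle_even_length:
  fixes f :: "'v \<Rightarrow> bool"
  assumes bipartite: "\<And>u v. E u v \<Longrightarrow> f u \<noteq> f v"
    and cycle: "is_cycle V E c"
  shows "even (length c)"
proof -
  define n where "n = length c"
  have n3: "n \<ge> 3" and edge: "\<And>i. i < n \<Longrightarrow> E (c ! i) (c ! ((i + 1) mod n))"
    using cycle by (auto simp: is_cycle_def n_def)
  have colour: "f (c ! i) = (f (c ! 0) \<noteq> odd i)" if "i < n" for i
    using that
  proof (induction i)
    case (Suc i)
    then have "E (c ! i) (c ! Suc i)"
      using edge[of i] by simp
    then show ?case
      using Suc bipartite by fastforce
  qed simp
  have "E (c ! (n - 1)) (c ! 0)"
    using edge[of "n - 1"] n3 by simp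
  then have "f (c ! (n - 1)) \<noteq> f (c ! 0)"
    by (rule bipartite)
  then have "odd (n - 1)"
    using colour[of "n - 1"] n3 by auto
  then show ?thesis
    using n3 by (simp add: n_def)
qed

lemma girth_ge_6I:
  fixes f :: "'v \<Rightarrow> bool"
  assumes bipartite: "\<And>u v. E u v \<Longrightarrow> f u \<noteq> f v"
    and no_4_cycle: "\<And>u x v y. E u x \<Longrightarrow> E x v \<Longrightarrow> E v y \<Longrightarrow> E y u \<Longrightarrow> u \<noteq> v \<Longrightarrow> x = y"
  shows "girth_ge V E 6"
  unfolding girth_ge_def
proof (intro allI impI)
  fix c
  assume cycle: "is_cycle V E c"
  then have "distinct c"
    and edge: "\<And>i. i < length c \<Longrightarrow> E (c ! i) (c ! ((i + 1) mod length c))"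
    by (auto simp: is_cycle_def)
  have "length c \<ge> 3"
    using cycle by (simp add: is_cycle_def)
  moreover have "even (length c)"
    using is_cycle_even_length[OF bipartite cycle] .
  moreover have "length c \<noteq> 4"
  proof
    assume "length c = 4"
    then obtain u x v y where c: "c = [u, x, v, y]"
      by (auto simp: eval_nat_numeral length_Suc_conv)
    have "E u x" "E x v" "E v y" "E y u"
      using edge[of 0] edge[of 1] edge[of 2] edge[of 3] c by simp_all
    moreover have "u \<noteq> v"
      using \<open>distinct c\<close> c by simp
    ultimately have "x = y"
      by (rule no_4_cycle)
    then show False
      using \<open>distinct c\<close> c by simp
  qed
  ultimately show "length c \<ge> 6"
    by presburger
qed

definition Gk_blocks :: "nat \<Rightarrow> (nat \<Rightarrow> nat \<Rightarrow> pos set) \<Rightarrow> pos set set" where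
  "Gk_blocks k Ls = {row k i | i. i \<in> {1..k}} \<union> {Ls s n | s n. s \<in> {1..k-1} \<and> n \<in> {1..k}}"

lemma Gk_vertices_eq: "Gk_vertices k Ls = Inl ` grid k \<union> Inr ` Gk_blocks k Ls"
  by (simp add: Gk_vertices_def Gk_blocks_def)

lemma Gk_blocks_inter:
  assumes mols: "MOLS k Ls"
    and S: "S \<in> Gk_blocks k Ls" and T: "T \<in> Gk_blocks k Ls" and "S \<noteq> T"
  shows "S \<inter> T = {} \<or> card (S \<inter> T) = 1"
proof -
  have latin: "latin_square k (Ls s)" if "s \<in> {1..k-1}" for s
    using mols that by (simp add: MOLS_def)
  have row_latin: "card (row k i \<inter> Ls s n) = 1"
    if "i \<in> {1..k}" "s \<in> {1..k-1}" "n \<in> {1..k}" for i s n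
    using latin[OF that(2)] that by (simp add: latin_square_def)
  from S T \<open>S \<noteq> T\<close> show ?thesis
    unfolding Gk_blocks_def
  proof (elim UnE CollectE exE conjE)
    fix i j
    assume "S = row k i" "T = row k j" "S \<noteq> T"
    then show ?thesis
      by (auto simp: row_def)
  next
    fix i t m
    assume "S = row k i" "i \<in> {1..k}" "T = Ls t m" "t \<in> {1..k-1}" "m \<in> {1..k}"
    then show ?thesis
      using row_latin by simp
  next
    fix s n j
    assume "S = Ls s n" "s \<in> {1..k-1}" "n \<in> {1..k}" "T = row k j" "j \<in> {1..k}"
    then show ?thesis
      using row_latin by (simp add: Int_commute)
  next
    fix s n t m
    assume S: "S = Ls s n" "s \<in> {1..k-1}" "n \<in> {1..k}"
      and T: "T = Ls t m" "t \<in> {1..k-1}" "m \<in> {1..k}"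
    show ?thesis
    proof (cases "s = t")
      case True
      with S T \<open>S \<noteq> T\<close> have "n \<noteq> m"
        by blast
      then have "Ls s n \<inter> Ls s m = {}"
        using latin[OF S(2)] S(3) T(3) unfolding latin_square_def by blast
      then show ?thesis
        using S T True by simp
    next
      case False
      then show ?thesis
        using mols S T by (simp add: MOLS_def orthogonal_def)
    qed
  qed
qed

lemma Gk_blocks_meet_at_most_once:
  assumes "MOLS k Ls" "S \<in> Gk_blocks k Ls" "T \<in> Gk_blocks k Ls" "S \<noteq> T"
    and "p \<in> S" "p \<in> T" "q \<in> S" "q \<in> T"
  shows "p = q"
proof -
  have "p \<in> S \<inter> T" "q \<in> S \<inter> T"
    using assms(5-) by simp_all
  moreover have "card (S \<inter> T) = 1"
    using Gk_blocks_inter[OF assms(1-4)] \<open>p \<in> S \<inter> T\<close> by auto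
  ultimately show ?thesis
    by (metis card_1_singletonE singletonD)
qed

lemma Gk_adj_iff:
  "Gk_adj k Ls u v \<longleftrightarrow>
     (\<exists>p S. p \<in> grid k \<and> S \<in> Gk_blocks k Ls \<and> p \<in> S \<and>
        (u = Inl p \<and> v = Inr S \<or> u = Inr S \<and> v = Inl p))"
  by (auto simp: Gk_adj_def Gk_vertices_eq)

lemma Gk_adj_bipartite: "Gk_adj k Ls u v \<Longrightarrow> isl u \<noteq> isl v"
  by (auto simp: Gk_adj_iff)

lemma Gk_no_4_cycle:
  assumes "MOLS k Ls"
    and "Gk_adj k Ls u x" "Gk_adj k Ls x v" "Gk_adj k Ls v y" "Gk_adj k Ls y u" "u \<noteq> v"
  shows "x = y"
  using assms(2-) Gk_blocks_meet_at_most_once[OF assms(1)] unfolding Gk_adj_iff by fastforce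

text \<open>The hypothesis \<open>primepow k\<close> only guarantees that \<open>k - 1\<close> mutually orthogonal Latin
  squares exist; the girth bound itself holds for every family satisfying \<open>MOLS k Ls\<close>.\<close>

theorem lemma2:
  fixes k :: nat and Ls :: "nat \<Rightarrow> nat \<Rightarrow> pos set"
  assumes "primepow k"
    and "MOLS k Ls"
  shows "girth_ge (Gk_vertices k Ls) (Gk_adj k Ls) 6"
  using girth_ge_6I[of "Gk_adj k Ls" isl] Gk_adj_bipartite Gk_no_4_cycle[OF assms(2)] by blast

end
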